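(* Let $n\ge 3$ and consider the right lobster $\mathcal{L}^{1,1}_{n-2}$. For $1\le i<j\le n$ let $M_{j,i}$ be the unique tableau in $\mathrm{SET}(\mathcal{L}^{1,1}_{n-2})$ with $j$ in the top claw cell and $i$ in the bottom claw cell. Then the poset $\mathrm{SET}(\mathcal{L}^{1,1}_{n-2})$ is isomorphic to the root poset of the root system $A_{n-1}$, and also to the poset $\{(i,j)\in\mathbb{N}^2: i+j\le n-2\}$ ordered by $(i,j)\ge(k,\ell)$ iff $k\ge i$ and $\ell\ge j$. It has exactly $n-1$ minimal elements, namely $M_{i+1,i}$ for $1\le i\le n-1$; all minimal elements have the same number of inversions; and $|\mathrm{SET}(\mathcal{L}^{1,1}_{n-2})|=\binom{n}{2}$.
   Context: For positive integers $b,c_1,c_2$, the right lobster $\mathcal{L}^{c_1,c_2}_b$ is the skew diagram $\alpha/\beta$ with $\alpha=(b+1+c_2,\,b+1,\,b+1+c_1)$ and $\beta=(b+1,1,b+1)$ (rows numbered from the bottom; $\alpha/\beta$ consists of the cells in row $i$, column $j$ with $\beta_i<j\le\alpha_i$). Thus it has three rows: the bottom row with $c_2$ cells in columns $b+2,\ldots,b+1+c_2$, the middle row (the body) with $b$ cells in columns $2,\ldots,b+1$, and the top row with $c_1$ cells in columns $b+2,\ldots,b+1+c_1$; the top and bottom rows are the claws. $\mathrm{SET}$ of a skew shape with $m$ cells is the set of bijective fillings with $1,\ldots,m$ whose rows increase left to right and columns increase bottom to top. For $1\le i\le m-1$, $\pi_i(T)=T$ if $i+1$ is in a strictly higher row than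 $i$, $\pi_i(T)=s_i(T)$ (swap $i$ and $i+1$) if $i+1$ is in a strictly lower row than $i$, and $\pi_i(T)=0$ otherwise; the poset order is $T\le T'$ iff $T'$ is obtained from $T$ by a sequence of operators $\pi_i$ (all intermediate results nonzero). The number of inversions of a tableau is the number of inversions of its reading word, obtained by reading rows right to left, from the top row down. The root poset of $A_{n-1}$ is the set of positive roots $\{e_i-e_j:1\le i<j\le n\}$ with $\gamma\le\delta$ iff $\delta-\gamma$ is a nonnegative integer combination of the simple roots $e_k-e_{k+1}$. *)

theory Defs
  imports Main
begin

type_synonym cell = "nat \<times> nat"   (* (row, column), rows numbered from the bottom, starting at 1 *)
type_synonym tableau = "cell \<Rightarrow> nat"

text \<open>Skew diagram alpha/beta, alpha and beta given as lists, entry k-1 = row k (bottom row first).\<close>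
definition skew_cells :: "nat list \<Rightarrow> nat list \<Rightarrow> cell set" where
  "skew_cells \<alpha> \<beta> = {(r, c). 1 \<le> r \<and> r \<le> length \<alpha> \<and> \<beta> ! (r - 1) < c \<and> c \<le> \<alpha> ! (r - 1)}"

text \<open>Standard (bijective) fillings; values outside the shape are fixed to 0 so that
  tableaux are determined by their entries on the shape.\<close>
definition SET :: "cell set \<Rightarrow> tableau set" where
  "SET D = {T. bij_betw T D {1..card D} \<and> (\<forall>x. x \<notin> D \<longrightarrow> T x = 0)
     \<and> (\<forall>r c c'. (r, c) \<in> D \<longrightarrow> (r, c') \<in> D \<longrightarrow> c < c' \<longrightarrow> T (r, c) < T (r, c'))
     \<and> (\<forall>r r' c. (r, c) \<in> D \<longrightarrow> (r', c) \<in> D \<longrightarrow> r < r' \<longrightarrow> T (r, c) < T (r', c))}"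

definition row_of :: "cell set \<Rightarrow> tableau \<Rightarrow> nat \<Rightarrow> nat" where
  "row_of D T k = fst (THE x. x \<in> D \<and> T x = k)"

definition swap_vals :: "nat \<Rightarrow> tableau \<Rightarrow> tableau" where
  "swap_vals i T = (\<lambda>x. if T x = i then i + 1 else if T x = i + 1 then i else T x)"

text \<open>The operator pi_i; None plays the role of 0.\<close>
definition pi_op :: "cell set \<Rightarrow> nat \<Rightarrow> tableau \<Rightarrow> tableau option" where
  "pi_op D i T =
     (if row_of D T i < row_of D T (i + 1) then Some T
      else if row_of D T (i + 1) < row_of D T i then Some (swap_vals i T)
      else None)"

definition pi_step :: "cell set \<Rightarrow> tableau \<Rightarrow> tableau \<Rightarrow> bool" where
  "pi_step D T T' \<longleftrightarrow> (\<exists>i. 1 \<le> i \<and> i \<le> card D - 1 \<and> pi_op D i T = Some T')"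

definition set_le :: "cell set \<Rightarrow> tableau \<Rightarrow> tableau \<Rightarrow> bool" where
  "set_le D T T' \<longleftrightarrow> T \<in> SET D \<and> T' \<in> SET D \<and> (pi_step D)\<^sup>*\<^sup>* T T'"

definition minimal_in :: "'a set \<Rightarrow> ('a \<Rightarrow> 'a \<Rightarrow> bool) \<Rightarrow> 'a \<Rightarrow> bool" where
  "minimal_in A le x \<longleftrightarrow> x \<in> A \<and> (\<forall>y\<in>A. le y x \<longrightarrow> y = x)"

definition poset_iso :: "'a set \<Rightarrow> ('a \<Rightarrow> 'a \<Rightarrow> bool) \<Rightarrow> 'b set \<Rightarrow> ('b \<Rightarrow> 'b \<Rightarrow> bool) \<Rightarrow> bool" where
  "poset_iso A leA B leB \<longleftrightarrow>
     (\<exists>f. bij_betw f A B \<and> (\<forall>x\<in>A. \<forall>y\<in>A. leA x y \<longleftrightarrow> leB (f x) (f y)))"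

text \<open>Reading word: rows read right to left, from the top row down.\<close>
definition reading_word :: "nat list \<Rightarrow> nat list \<Rightarrow> tableau \<Rightarrow> nat list" where
  "reading_word \<alpha> \<beta> T =
     concat (map (\<lambda>r. map (\<lambda>c. T (r, c)) (rev [\<beta> ! (r - 1) + 1 ..< \<alpha> ! (r - 1) + 1]))
                 (rev [1 ..< length \<alpha> + 1]))"

definition inversions :: "nat list \<Rightarrow> nat" where
  "inversions w = card {(p, q). p < q \<and> q < length w \<and> w ! q < w ! p}"

definition lobster_alpha :: "nat \<Rightarrow> nat \<Rightarrow> nat \<Rightarrow> nat list" where
  "lobster_alpha b c1 c2 = [b + 1 + c2, b + 1, b + 1 + c1]"

definition lobster_beta :: "nat \<Rightarrow> nat list" where
  "lobster_beta b = [b + 1, 1, b + 1]"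

definition lobster :: "nat \<Rightarrow> nat \<Rightarrow> nat \<Rightarrow> cell set" where
  "lobster b c1 c2 = skew_cells (lobster_alpha b c1 c2) (lobster_beta b)"

text \<open>Root poset of A_{n-1}: vectors in Z^n as functions nat => int (coordinates 1..n).\<close>
definition evec :: "nat \<Rightarrow> nat \<Rightarrow> int" where
  "evec i = (\<lambda>k. if k = i then 1 else 0)"

definition pos_roots_A :: "nat \<Rightarrow> (nat \<Rightarrow> int) set" where
  "pos_roots_A n = {\<lambda>k. evec i k - evec j k | i j. 1 \<le> i \<and> i < j \<and> j \<le> n}"

definition root_le_A :: "nat \<Rightarrow> (nat \<Rightarrow> int) \<Rightarrow> (nat \<Rightarrow> int) \<Rightarrow> bool" where
  "root_le_A n \<gamma> \<delta> \<longleftrightarrow>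
     (\<exists>a :: nat \<Rightarrow> nat. \<forall>k. \<delta> k - \<gamma> k =
        (\<Sum>t = 1..<n. int (a t) * (evec t k - evec (t + 1) k)))"

text \<open>M_{j,i} in SET(L^{1,1}_{n-2}): j in the top claw cell (3, n), i in the bottom claw cell (1, n).\<close>
definition M_tab :: "nat \<Rightarrow> nat \<Rightarrow> nat \<Rightarrow> tableau" where
  "M_tab n j i = (THE T. T \<in> SET (lobster (n - 2) 1 1) \<and> T (3, n) = j \<and> T (1, n) = i)"

end

(*
  A standard filling of the lobster is determined by its claw entries i < j (bottom, top), since
  the body must carry the remaining values in increasing order. On such a filling pi_k moves the
  top entry from j to j + 1 when k = j, moves the bottom entry from i to i - 1 when k = i - 1, and
  otherwise fixes or kills the filling. Hence T <= T' iff i' <= i and j <= j', which is exactly the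
  order on the positive roots e_i - e_j: a difference of two roots is a nonnegative combination of
  simple roots iff its partial sums are nonnegative. The minimal fillings are those with j = i + 1;
  their reading word is i + 1, the decreasing body, i, which has n - 1 + C(n - 2, 2) inversions.
*)
theory Submission
  imports Defs
begin

lemma poset_iso_trans:
  assumes "poset_iso A leA B leB" and "poset_iso B leB C leC"
  shows "poset_iso A leA C leC"
proof -
  obtain f g where f: "bij_betw f A B" "\<forall>x\<in>A. \<forall>y\<in>A. leA x y \<longleftrightarrow> leB (f x) (f y)"
    and g: "bij_betw g B C" "\<forall>x\<in>B. \<forall>y\<in>B. leB x y \<longleftrightarrow> leC (g x) (g y)"
    using assms unfolding poset_iso_def by blast
  have "\<forall>x\<in>A. \<forall>y\<in>A. leA x y \<longleftrightarrow> leC ((g \<circ> f) x) ((g \<circ> f) y)"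
    using f g bij_betwE[OF f(1)] by simp
  with bij_betw_trans[OF f(1) g(1)] show ?thesis
    unfolding poset_iso_def by blast
qed

lemma minimal_in_bij_betw_iff:
  assumes f: "bij_betw f A B" and le: "\<forall>x\<in>A. \<forall>y\<in>A. leA x y \<longleftrightarrow> leB (f x) (f y)" and x: "x \<in> A"
  shows "minimal_in A leA x \<longleftrightarrow> minimal_in B leB (f x)"
proof -
  have "(\<forall>y\<in>B. leB y (f x) \<longrightarrow> y = f x) \<longleftrightarrow> (\<forall>z\<in>A. leB (f z) (f x) \<longrightarrow> f z = f x)"
    using bij_betw_imp_surj_on[OF f] by blast
  also have "\<dots> \<longleftrightarrow> (\<forall>z\<in>A. leA z x \<longrightarrow> z = x)"
    using le x bij_betw_imp_inj_on[OF f] by (auto simp: inj_on_eq_iff)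
  finally show ?thesis
    using x bij_betwE[OF f] by (auto simp: minimal_in_def)
qed

lemma SET_inj_on: "T \<in> SET D \<Longrightarrow> inj_on T D"
  by (simp add: SET_def bij_betw_def)

lemma SET_image: "T \<in> SET D \<Longrightarrow> T ` D = {1..card D}"
  by (simp add: SET_def bij_betw_def)

lemma SET_outside: "T \<in> SET D \<Longrightarrow> x \<notin> D \<Longrightarrow> T x = 0"
  by (cases x) (simp add: SET_def)

lemma SET_row_less:
  "T \<in> SET D \<Longrightarrow> (r, c) \<in> D \<Longrightarrow> (r, c') \<in> D \<Longrightarrow> c < c' \<Longrightarrow> T (r, c) < T (r, c')"
  by (simp add: SET_def)

lemma SET_column_less:
  "T \<in> SET D \<Longrightarrow> (r, c) \<in> D \<Longrightarrow> (r', c) \<in> D \<Longrightarrow> r < r' \<Longrightarrow> T (r, c) < T (r', c)"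
  by (simp add: SET_def)

lemma row_of_eq:
  assumes "inj_on T D" and "x \<in> D"
  shows "row_of D T (T x) = fst x"
proof -
  have "(THE y. y \<in> D \<and> T y = T x) = x"
    using assms by (auto simp: inj_on_def)
  then show ?thesis by (simp add: row_of_def)
qed

lemma inversions_Nil [simp]: "inversions [] = 0"
  by (simp add: inversions_def)

lemma inversions_Cons: "inversions (x # xs) = length (filter (\<lambda>y. y < x) xs) + inversions xs"
proof -
  let ?S = "\<lambda>w :: nat list. {(p, q). p < q \<and> q < length w \<and> w ! q < w ! p}"
  let ?A = "(\<lambda>q. (0, Suc q)) ` {q. q < length xs \<and> xs ! q < x}"
  let ?B = "(\<lambda>(p, q). (Suc p, Suc q)) ` ?S xs"
  have split: "?S (x # xs) = ?A \<union> ?B"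
  proof (intro set_eqI iffI)
    fix z assume z: "z \<in> ?S (x # xs)"
    then obtain p q where "z = (p, q)" "p < q"
      by blast
    moreover from \<open>p < q\<close> obtain q' where "q = Suc q'"
      using less_imp_Suc_add by blast
    ultimately show "z \<in> ?A \<union> ?B"
      using z by (cases p) (auto simp: image_iff)
  qed auto
  have "finite (?S xs)"
    by (rule finite_subset[of _ "{..<length xs} \<times> {..<length xs}"]) auto
  then have "card (?A \<union> ?B) = card {q. q < length xs \<and> xs ! q < x} + card (?S xs)"
    by (subst card_Un_disjoint) (auto simp: card_image inj_on_def)
  then show ?thesis
    unfolding inversions_def split by (simp add: length_filter_conv_card)
qed

lemma inversions_snoc: "inversions (xs @ [y]) = inversions xs + length (filter (\<lambda>x. y < x) xs)"
  by (induction xs) (simp_all add: inversions_Cons)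

lemma inversions_strictly_decreasing:
  "sorted_wrt (>) xs \<Longrightarrow> inversions xs = length xs choose 2"
proof (induction xs)
  case Nil
  then show ?case by simp
next
  case (Cons x xs)
  then have "filter (\<lambda>y. y < x) xs = xs"
    by (simp add: filter_id_conv)
  with Cons show ?case
    by (simp add: inversions_Cons numeral_2_eq_2)
qed

section \<open>Positive roots of type A\<close>

definition root_indices :: "nat \<Rightarrow> (nat \<times> nat) set" where
  "root_indices n = {(i, j). 1 \<le> i \<and> i < j \<and> j \<le> n}"

lemma mem_root_indices [simp]: "(i, j) \<in> root_indices n \<longleftrightarrow> 1 \<le> i \<and> i < j \<and> j \<le> n"
  by (simp add: root_indices_def)

(* Pairs (i, j) index both the roots e_i - e_j and the claw entries (bottom i, top j) of a filling;
   claw_le is the order they carry on either side. *)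
definition claw_le :: "nat \<times> nat \<Rightarrow> nat \<times> nat \<Rightarrow> bool" where
  "claw_le p q \<longleftrightarrow> fst q \<le> fst p \<and> snd p \<le> snd q"

lemma card_root_indices: "card (root_indices n) = n choose 2"
proof -
  have "bij_betw (\<lambda>(i, j). {i, j}) (root_indices n) {B. B \<subseteq> {1..n} \<and> card B = 2}"
    unfolding bij_betw_def
  proof
    show "inj_on (\<lambda>(i, j). {i, j}) (root_indices n)"
      by (auto simp: inj_on_def root_indices_def doubleton_eq_iff)
    show "(\<lambda>(i, j). {i, j}) ` root_indices n = {B. B \<subseteq> {1..n} \<and> card B = 2}"
    proof (intro set_eqI iffI)
      fix B assume "B \<in> {B. B \<subseteq> {1..n} \<and> card B = 2}"
      then obtain x y where "x \<noteq> y" "B = {x, y}" "{x, y} \<subseteq> {1..n}"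
        by (auto simp: card_2_iff)
      then have "B = {min x y, max x y}" "(min x y, max x y) \<in> root_indices n"
        by (auto simp: min_def max_def)
      then show "B \<in> (\<lambda>(i, j). {i, j}) ` root_indices n"
        by force
    qed (auto simp: root_indices_def)
  qed
  then show ?thesis
    by (simp add: bij_betw_same_card n_subsets)
qed

lemma minimal_in_root_indices_iff:
  "minimal_in (root_indices n) claw_le (i, j) \<longleftrightarrow> (i, j) \<in> root_indices n \<and> j = i + 1"
proof
  assume min: "minimal_in (root_indices n) claw_le (i, j)"
  then have ij: "(i, j) \<in> root_indices n"
    by (simp add: minimal_in_def)
  show "(i, j) \<in> root_indices n \<and> j = i + 1"
  proof (rule ccontr)
    assume "\<not> ?thesis"
    with ij have "(i + 1, j) \<in> root_indices n" "claw_le (i + 1, j) (i, j)"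
      by (auto simp: claw_le_def)
    with min show False
      by (auto simp: minimal_in_def)
  qed
next
  assume "(i, j) \<in> root_indices n \<and> j = i + 1"
  then show "minimal_in (root_indices n) claw_le (i, j)"
    by (auto simp: minimal_in_def claw_le_def)
qed

lemma sum_simple_roots_eq:
  fixes a :: "nat \<Rightarrow> nat" and n :: nat
  defines "c \<equiv> \<lambda>t. if 1 \<le> t \<and> t < n then int (a t) else 0"
  shows "(\<Sum>t = 1..<n. int (a t) * (evec t k - evec (t + 1) k)) = c k - c (k - 1)"
proof -
  have "(\<Sum>t = 1..<n. int (a t) * (evec t k - evec (t + 1) k))
      = (\<Sum>t = 1..<n. if t = k then int (a t) else 0) - (\<Sum>t = 1..<n. if t = k - 1 \<and> 1 \<le> k then int (a t) else 0)"
    unfolding sum_subtractf[symmetric] by (rule sum.cong) (auto simp: evec_def)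
  also have "\<dots> = c k - c (k - 1)"
    by (cases "1 \<le> k") (auto simp: c_def sum.delta')
  finally show ?thesis .
qed

(* The coefficient of the simple root e_t - e_(t+1) is forced to be the t-th partial sum of delta - gamma. *)
lemma root_le_A_iff_partial_sums:
  fixes \<gamma> \<delta> :: "nat \<Rightarrow> int"
  assumes zero: "\<gamma> 0 = \<delta> 0" and beyond: "\<And>k. n < k \<Longrightarrow> \<gamma> k = \<delta> k"
    and total: "(\<Sum>k\<le>n. \<delta> k - \<gamma> k) = 0"
  shows "root_le_A n \<gamma> \<delta> \<longleftrightarrow> (\<forall>K. 0 \<le> (\<Sum>k\<le>K. \<delta> k - \<gamma> k))"
proof
  assume "root_le_A n \<gamma> \<delta>"
  then obtain a :: "nat \<Rightarrow> nat" where a: "\<And>k. \<delta> k - \<gamma> k = (\<Sum>t = 1..<n. int (a t) * (evec t k - evec (t + 1) k))"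
    by (auto simp: root_le_A_def)
  define c where "c t = (if 1 \<le> t \<and> t < n then int (a t) else 0)" for t
  have "\<delta> k - \<gamma> k = c k - c (k - 1)" for k
    unfolding a c_def by (rule sum_simple_roots_eq)
  then have "(\<Sum>k\<le>K. \<delta> k - \<gamma> k) = c K" for K
    by (induction K) (simp_all add: c_def)
  then show "\<forall>K. 0 \<le> (\<Sum>k\<le>K. \<delta> k - \<gamma> k)"
    by (simp add: c_def)
next
  define P where "P K = (\<Sum>k\<le>K. \<delta> k - \<gamma> k)" for K
  assume "\<forall>K. 0 \<le> (\<Sum>k\<le>K. \<delta> k - \<gamma> k)"
  then have nonneg: "0 \<le> P K" for K
    by (simp add: P_def)
  have P_beyond: "P K = 0" if "n \<le> K" for K
    using that
  proof (induction K rule: dec_induct)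
    case base
    then show ?case using total by (simp add: P_def)
  next
    case (step K)
    then show ?case using beyond[of "Suc K"] by (simp add: P_def)
  qed
  define a where "a t = nat (P t)" for t
  have P_eq: "(if 1 \<le> t \<and> t < n then int (a t) else 0) = P t" for t
    using nonneg[of t] P_beyond[of t] zero by (cases t) (auto simp: a_def P_def)
  have "\<delta> k - \<gamma> k = (\<Sum>t = 1..<n. int (a t) * (evec t k - evec (t + 1) k))" for k
    unfolding sum_simple_roots_eq P_eq using zero by (cases k) (simp_all add: P_def)
  then show "root_le_A n \<gamma> \<delta>"
    unfolding root_le_A_def by blast
qed

lemma sum_atMost_evec: "(\<Sum>k\<le>K. evec i k) = of_bool (i \<le> K)"
  by (simp add: evec_def)

lemma root_le_A_pos_roots_iff:
  assumes ij: "(i, j) \<in> root_indices n" and ij': "(i', j') \<in> root_indices n"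
  shows "root_le_A n (\<lambda>k. evec i k - evec j k) (\<lambda>k. evec i' k - evec j' k) \<longleftrightarrow> claw_le (i, j) (i', j')"
proof -
  have partial: "(\<Sum>k\<le>K. (evec i' k - evec j' k) - (evec i k - evec j k))
      = of_bool (i' \<le> K) - of_bool (j' \<le> K) - of_bool (i \<le> K) + of_bool (j \<le> K)" for K
    by (simp add: sum.distrib sum_subtractf sum_atMost_evec)
  have total: "(\<Sum>k\<le>n. (evec i' k - evec j' k) - (evec i k - evec j k)) = 0"
    unfolding partial using ij ij' by simp
  have "root_le_A n (\<lambda>k. evec i k - evec j k) (\<lambda>k. evec i' k - evec j' k)
      \<longleftrightarrow> (\<forall>K. 0 \<le> of_bool (i' \<le> K) - of_bool (j' \<le> K) - of_bool (i \<le> K) + (of_bool (j \<le> K) :: int))"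
    unfolding partial[symmetric]
    by (rule root_le_A_iff_partial_sums) (use ij ij' total in \<open>auto simp: evec_def\<close>)
  also have "\<dots> \<longleftrightarrow> claw_le (i, j) (i', j')"
  proof
    assume sums: "\<forall>K. 0 \<le> of_bool (i' \<le> K) - of_bool (j' \<le> K) - of_bool (i \<le> K) + (of_bool (j \<le> K) :: int)"
    have "i' \<le> i"
      using sums[rule_format, of i] ij by (auto split: if_splits)
    moreover have "j \<le> j'"
    proof (rule ccontr)
      assume "\<not> j \<le> j'"
      with ij ij' have "i' \<le> j - 1" "j' \<le> j - 1" "i \<le> j - 1" "\<not> j \<le> j - 1"
        by auto
      with sums[rule_format, of "j - 1"] show False
        by simp
    qed
    ultimately show "claw_le (i, j) (i', j')"
      by (simp add: claw_le_def)
  next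
    assume "claw_le (i, j) (i', j')"
    with ij ij' show "\<forall>K. 0 \<le> of_bool (i' \<le> K) - of_bool (j' \<le> K) - of_bool (i \<le> K) + (of_bool (j \<le> K) :: int)"
      by (auto simp: claw_le_def)
  qed
  finally show ?thesis .
qed

lemma bij_betw_pos_roots:
  "bij_betw (\<lambda>(i, j). \<lambda>k. evec i k - evec j k) (root_indices n) (pos_roots_A n)"
  unfolding bij_betw_def
proof
  show "inj_on (\<lambda>(i, j). \<lambda>k. evec i k - evec j k) (root_indices n)"
  proof (rule inj_onI, clarify)
    fix i j i' j'
    assume ij: "(i, j) \<in> root_indices n" and ij': "(i', j') \<in> root_indices n"
      and eq: "(\<lambda>k. evec i k - evec j k) = (\<lambda>k. evec i' k - evec j' k)"
    from eq have "evec i i - evec j i = evec i' i - evec j' i" "evec i j - evec j j = evec i' j - evec j' j"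
      by meson+
    with ij ij' show "i = i' \<and> j = j'"
      by (auto simp: evec_def split: if_splits)
  qed
  show "(\<lambda>(i, j). \<lambda>k. evec i k - evec j k) ` root_indices n = pos_roots_A n"
    by (auto simp: root_indices_def pos_roots_A_def)
qed

lemma poset_iso_pos_roots: "poset_iso (root_indices n) claw_le (pos_roots_A n) (root_le_A n)"
  unfolding poset_iso_def
proof (intro exI conjI ballI)
  show "bij_betw (\<lambda>(i, j). \<lambda>k. evec i k - evec j k) (root_indices n) (pos_roots_A n)"
    by (rule bij_betw_pos_roots)
  fix x y assume "x \<in> root_indices n" "y \<in> root_indices n"
  then show "claw_le x y \<longleftrightarrow> root_le_A n ((\<lambda>(i, j). \<lambda>k. evec i k - evec j k) x) ((\<lambda>(i, j). \<lambda>k. evec i k - evec j k) y)"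
    using root_le_A_pos_roots_iff by (cases x, cases y) simp
qed

lemma poset_iso_triangle:
  assumes n: "2 \<le> n"
  shows "poset_iso (root_indices n) claw_le
    {p :: nat \<times> nat. fst p + snd p \<le> n - 2} (\<lambda>p q. fst q \<le> fst p \<and> snd q \<le> snd p)"
  unfolding poset_iso_def
proof (intro exI conjI)
  show "bij_betw (\<lambda>(i, j). (i - 1, n - j)) (root_indices n) {p. fst p + snd p \<le> n - 2}"
    by (rule bij_betw_byWitness[where f' = "\<lambda>(p, q). (p + 1, n - q)"]) (use n in auto)
  show "\<forall>x\<in>root_indices n. \<forall>y\<in>root_indices n. claw_le x y \<longleftrightarrow>
      fst ((\<lambda>(i, j). (i - 1, n - j)) y) \<le> fst ((\<lambda>(i, j). (i - 1, n - j)) x) \<and>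
      snd ((\<lambda>(i, j). (i - 1, n - j)) y) \<le> snd ((\<lambda>(i, j). (i - 1, n - j)) x)"
    by (auto simp: claw_le_def)
qed

section \<open>Standard fillings of the lobster\<close>

definition lobster11_cells :: "nat \<Rightarrow> cell set" where
  "lobster11_cells n = insert (1, n) (insert (3, n) (Pair 2 ` {2..<n}))"

lemma mem_lobster11_cells:
  "(r, c) \<in> lobster11_cells n \<longleftrightarrow> (r, c) = (1, n) \<or> (r, c) = (3, n) \<or> (r = 2 \<and> 2 \<le> c \<and> c < n)"
  by (auto simp: lobster11_cells_def)

lemma lobster_1_1_eq:
  assumes "3 \<le> n"
  shows "lobster (n - 2) 1 1 = lobster11_cells n"
proof -
  have "(r, c) \<in> lobster (n - 2) 1 1 \<longleftrightarrow> (r, c) \<in> lobster11_cells n" for r c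
  proof -
    have "r \<in> {1, 2, 3} \<or> r < 1 \<or> 3 < r" by auto
    then show ?thesis
      using assms by (auto simp: mem_lobster11_cells lobster_def skew_cells_def
          lobster_alpha_def lobster_beta_def)
  qed
  then show ?thesis by auto
qed

lemma card_lobster11_cells:
  assumes "2 \<le> n"
  shows "card (lobster11_cells n) = n"
proof -
  have "card (Pair (2::nat) ` {2..<n}) = n - 2"
    by (subst card_image) (auto simp: inj_on_def)
  moreover have "(1, n) \<notin> Pair (2::nat) ` {2..<n}" "(3, n) \<notin> Pair (2::nat) ` {2..<n}"
    by auto
  ultimately show ?thesis
    using assms by (simp add: lobster11_cells_def)
qed

(* i in the bottom claw, j in the top claw, and the body carries {1..n} - {i, j} in increasing order. *)
definition lobster_tab :: "nat \<Rightarrow> nat \<Rightarrow> nat \<Rightarrow> tableau" where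
  "lobster_tab n i j = (\<lambda>(r, c).
     if (r, c) = (1, n) then i
     else if (r, c) = (3, n) then j
     else if r = 2 \<and> 2 \<le> c \<and> c < n then (if c \<le> i then c - 1 else if c < j then c else c + 1)
     else 0)"

(* [simplified] stores the cell (1, n) in its simp normal form (Suc 0, n), so that the rule fires. *)
lemma lobster_tab_claws [simplified, simp]:
  "lobster_tab n i j (1, n) = i" "lobster_tab n i j (3, n) = j"
  by (simp_all add: lobster_tab_def)

lemma lobster_tab_inject: "lobster_tab n i j = lobster_tab n i' j' \<longleftrightarrow> i = i' \<and> j = j'"
  by (metis lobster_tab_claws)

lemma lobster_tab_image:
  assumes ij: "(i, j) \<in> root_indices n"
  shows "lobster_tab n i j ` lobster11_cells n = {1..n}"
proof
  let ?T = "lobster_tab n i j" and ?D = "lobster11_cells n"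
  show "?T ` ?D \<subseteq> {1..n}"
    using ij unfolding lobster11_cells_def by (auto simp: lobster_tab_def)
  show "{1..n} \<subseteq> ?T ` ?D"
  proof
    fix v assume v: "v \<in> {1..n}"
    have claws: "?T (1, n) \<in> ?T ` ?D" "?T (3, n) \<in> ?T ` ?D"
      by (simp_all add: lobster11_cells_def)
    have body: "?T (2, c) \<in> ?T ` ?D" if "2 \<le> c" "c < n" for c
      using that by (simp add: mem_lobster11_cells)
    consider "v = i" | "v = j" | "v < i" | "i < v" "v < j" | "j < v"
      by linarith
    then show "v \<in> ?T ` ?D"
    proof cases
      case 3
      then have "v = ?T (2, v + 1)"
        using ij v by (simp add: lobster_tab_def)
      with body[of "v + 1"] 3 ij v show ?thesis by simp
    next
      case 4
      then have "v = ?T (2, v)"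
        using ij v by (simp add: lobster_tab_def)
      with body[of v] 4 ij v show ?thesis by simp
    next
      case 5
      then have "v = ?T (2, v - 1)"
        using ij v by (simp add: lobster_tab_def) arith
      with body[of "v - 1"] 5 ij v show ?thesis by auto
    qed (use claws in simp_all)
  qed
qed

lemma lobster_tab_in_SET:
  assumes ij: "(i, j) \<in> root_indices n"
  shows "lobster_tab n i j \<in> SET (lobster11_cells n)"
proof -
  let ?T = "lobster_tab n i j" and ?D = "lobster11_cells n"
  have image: "?T ` ?D = {1..card ?D}"
    using lobster_tab_image[OF ij] ij by (simp add: card_lobster11_cells)
  then have "inj_on ?T ?D"
    by (intro eq_card_imp_inj_on) (auto simp: lobster11_cells_def)
  with image show ?thesis
    using ij by (auto simp: SET_def bij_betw_def mem_lobster11_cells lobster_tab_def)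
qed

lemma SET_lobster11_claws:
  assumes T: "T \<in> SET (lobster11_cells n)" and n: "2 \<le> n"
  shows "(T (1, n), T (3, n)) \<in> root_indices n"
proof -
  have "(1, n) \<in> lobster11_cells n" "(3, n) \<in> lobster11_cells n"
    by (simp_all add: lobster11_cells_def)
  then have "T (1, n) \<in> {1..n}" "T (3, n) \<in> {1..n}" "T (1, n) < T (3, n)"
    using SET_image[OF T] SET_column_less[OF T] n by (auto simp: card_lobster11_cells)
  then show ?thesis by simp
qed

lemma sorted_body_SET_lobster11:
  assumes T: "T \<in> SET (lobster11_cells n)"
  shows "sorted_wrt (<) (map (\<lambda>c. T (2, c)) [2..<n])"
  unfolding sorted_wrt_map
  by (rule sorted_wrt_mono_rel[OF _ sorted_wrt_upt])
    (auto intro: SET_row_less[OF T] simp: mem_lobster11_cells)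

lemma SET_lobster11_eqI:
  assumes T: "T \<in> SET (lobster11_cells n)" and T': "T' \<in> SET (lobster11_cells n)"
    and bottom: "T (1, n) = T' (1, n)" and top: "T (3, n) = T' (3, n)"
  shows "T = T'"
proof -
  let ?D = "lobster11_cells n"
  let ?body = "\<lambda>S. map (\<lambda>c. S (2, c)) [2..<n]"
  have body_set: "set (?body S) = {1..card ?D} - {S (1, n), S (3, n)}" if S: "S \<in> SET ?D" for S
  proof -
    have "set (?body S) = S ` (?D - {(1, n), (3, n)})"
      by (auto simp: lobster11_cells_def)
    also have "\<dots> = S ` ?D - S ` {(1, n), (3, n)}"
      by (rule inj_on_image_set_diff[OF SET_inj_on[OF S]]) (auto simp: lobster11_cells_def)
    finally show ?thesis
      using SET_image[OF S] by simp
  qed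
  have "?body T = ?body T'"
    by (rule strict_sorted_equal[OF sorted_body_SET_lobster11[OF T'] sorted_body_SET_lobster11[OF T]])
      (simp only: body_set[OF T] body_set[OF T'] bottom top)
  then have body: "T (2, c) = T' (2, c)" if "2 \<le> c" "c < n" for c
    using that by (simp add: map_eq_conv)
  show ?thesis
  proof
    fix x :: cell
    show "T x = T' x"
    proof (cases "x \<in> ?D")
      case True
      with bottom top body show ?thesis
        by (cases x) (auto simp: mem_lobster11_cells)
    next
      case False
      then show ?thesis
        using SET_outside[OF T] SET_outside[OF T'] by simp
    qed
  qed
qed

lemma SET_lobster11_eq_tab:
  assumes T: "T \<in> SET (lobster11_cells n)" and n: "2 \<le> n"
  shows "T = lobster_tab n (T (1, n)) (T (3, n))"
  using SET_lobster11_claws[OF T n]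
  by (intro SET_lobster11_eqI[OF T lobster_tab_in_SET]) simp_all

lemma bij_betw_claws:
  assumes n: "2 \<le> n"
  shows "bij_betw (\<lambda>T. (T (1, n), T (3, n))) (SET (lobster11_cells n)) (root_indices n)"
proof (rule bij_betw_byWitness[where f' = "\<lambda>(i, j). lobster_tab n i j"])
  show "\<forall>T \<in> SET (lobster11_cells n). (\<lambda>(i, j). lobster_tab n i j) (T (1, n), T (3, n)) = T"
    using SET_lobster11_eq_tab[OF _ n] by auto
qed (use SET_lobster11_claws[OF _ n] lobster_tab_in_SET in auto)

lemma ex1_SET_lobster11_claws:
  assumes ij: "(i, j) \<in> root_indices n"
  shows "\<exists>!T. T \<in> SET (lobster11_cells n) \<and> T (3, n) = j \<and> T (1, n) = i"
proof (rule ex1I[of _ "lobster_tab n i j"])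
  show "lobster_tab n i j \<in> SET (lobster11_cells n) \<and> lobster_tab n i j (3, n) = j \<and> lobster_tab n i j (1, n) = i"
    using lobster_tab_in_SET[OF ij] by simp
  show "T = lobster_tab n i j" if "T \<in> SET (lobster11_cells n) \<and> T (3, n) = j \<and> T (1, n) = i" for T
    using that SET_lobster11_eqI[OF _ lobster_tab_in_SET[OF ij]] by simp
qed

lemma M_tab_eq:
  assumes n: "3 \<le> n" and ij: "(i, j) \<in> root_indices n"
  shows "M_tab n j i = lobster_tab n i j"
  unfolding M_tab_def lobster_1_1_eq[OF n]
  by (rule the1_equality[OF ex1_SET_lobster11_claws[OF ij]]) (simp add: lobster_tab_in_SET[OF ij])

section \<open>The operators and the order\<close>

lemma row_of_lobster_tab:
  assumes ij: "(i, j) \<in> root_indices n" and k: "k \<in> {1..n}"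
  shows "row_of (lobster11_cells n) (lobster_tab n i j) k = (if k = i then 1 else if k = j then 3 else 2)"
proof -
  let ?T = "lobster_tab n i j" and ?D = "lobster11_cells n"
  have T: "?T \<in> SET ?D"
    by (rule lobster_tab_in_SET[OF ij])
  have "k \<in> ?T ` ?D"
    using SET_image[OF T] k ij by (simp add: card_lobster11_cells)
  then obtain x where x: "x \<in> ?D" "k = ?T x"
    by blast
  have inj: "inj_on ?T ?D"
    by (rule SET_inj_on[OF T])
  have row: "row_of ?D ?T k = fst x"
    using row_of_eq[OF inj x(1)] x(2) by simp
  have claws: "(1, n) \<in> ?D" "(3, n) \<in> ?D"
    by (simp_all add: lobster11_cells_def)
  consider "x = (1, n)" | "x = (3, n)" | "fst x = 2"
    using x(1) by (auto simp: lobster11_cells_def)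
  then show ?thesis
  proof cases
    case 3
    then have "x \<noteq> (1, n)" "x \<noteq> (3, n)"
      by auto
    then have "k \<noteq> i" "k \<noteq> j"
      using inj_onD[OF inj _ x(1)] claws x(2) by force+
    with row 3 show ?thesis by simp
  qed (use row x(2) ij in simp_all)
qed

lemma swap_vals_raise_top:
  assumes "i < j" "j < n"
  shows "swap_vals j (lobster_tab n i j) = lobster_tab n i (j + 1)"
proof
  fix x :: cell
  obtain r c where x: "x = (r, c)" by fastforce
  show "swap_vals j (lobster_tab n i j) x = lobster_tab n i (j + 1) x"
    unfolding x swap_vals_def lobster_tab_def using assms
    by (cases "r = 1"; cases "r = 2"; cases "r = 3"; simp; linarith?)
qed

lemma swap_vals_lower_bottom:
  assumes "2 \<le> i" "i < j" "j \<le> n"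
  shows "swap_vals (i - 1) (lobster_tab n i j) = lobster_tab n (i - 1) j"
proof
  fix x :: cell
  obtain r c where x: "x = (r, c)" by fastforce
  show "swap_vals (i - 1) (lobster_tab n i j) x = lobster_tab n (i - 1) j x"
    unfolding x swap_vals_def lobster_tab_def using assms
    by (cases "r = 1"; cases "r = 2"; cases "r = 3"; simp; linarith?)
qed

lemma pi_op_lobster_tab:
  assumes ij: "(i, j) \<in> root_indices n" and k: "1 \<le> k" "k < n"
  shows "pi_op (lobster11_cells n) k (lobster_tab n i j) =
    (if k = j then Some (lobster_tab n i (j + 1))
     else if k + 1 = i then Some (lobster_tab n (i - 1) j)
     else if k = i \<or> k + 1 = j then Some (lobster_tab n i j)
     else None)"
proof -
  let ?row = "row_of (lobster11_cells n) (lobster_tab n i j)"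
  have row_k: "?row k = (if k = i then 1 else if k = j then 3 else 2)"
    and row_Suc_k: "?row (k + 1) = (if k + 1 = i then 1 else if k + 1 = j then 3 else 2)"
    using row_of_lobster_tab[OF ij] k by simp_all
  consider "k = j" | "k + 1 = i" | "k \<noteq> j" "k + 1 \<noteq> i"
    by blast
  then show ?thesis
  proof cases
    case 1
    with ij have "?row (k + 1) < ?row k"
      unfolding row_k row_Suc_k by simp
    with 1 ij k show ?thesis
      by (simp add: pi_op_def swap_vals_raise_top)
  next
    case 2
    with ij have "?row (k + 1) < ?row k"
      unfolding row_k row_Suc_k by simp
    moreover have "swap_vals k (lobster_tab n i j) = lobster_tab n (i - 1) j"
      using 2 ij k swap_vals_lower_bottom[of "k + 1" j n] by auto
    ultimately show ?thesis
      using 2 ij by (simp add: pi_op_def)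
  next
    case 3
    then show ?thesis
      using ij unfolding pi_op_def row_k row_Suc_k by auto
  qed
qed

lemma pi_step_lobster_tab:
  assumes ij: "(i, j) \<in> root_indices n" and step: "pi_step (lobster11_cells n) (lobster_tab n i j) T'"
  obtains i' j' where "T' = lobster_tab n i' j'" "(i', j') \<in> root_indices n" "claw_le (i, j) (i', j')"
proof -
  obtain k where k: "1 \<le> k" "k < n" and "pi_op (lobster11_cells n) k (lobster_tab n i j) = Some T'"
    using step ij by (auto simp: pi_step_def card_lobster11_cells)
  then consider "k = j" "T' = lobster_tab n i (j + 1)" | "k + 1 = i" "T' = lobster_tab n (i - 1) j"
    | "T' = lobster_tab n i j"
    using pi_op_lobster_tab[OF ij k] by (auto split: if_splits)
  then show ?thesis
  proof cases
    case 1
    with ij k that[of i "j + 1"] show ?thesis by (simp add: claw_le_def)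
  next
    case 2
    with ij k that[of "i - 1" j] show ?thesis by (auto simp: claw_le_def)
  next
    case 3
    with ij that[of i j] show ?thesis by (simp add: claw_le_def)
  qed
qed

lemma pi_step_raise_top:
  assumes ij: "(i, j) \<in> root_indices n" and "j < n"
  shows "pi_step (lobster11_cells n) (lobster_tab n i j) (lobster_tab n i (j + 1))"
  using assms pi_op_lobster_tab[OF ij, of j]
  unfolding pi_step_def by (intro exI[of _ j]) (auto simp: card_lobster11_cells)

lemma pi_step_lower_bottom:
  assumes ij: "(i, j) \<in> root_indices n" and "2 \<le> i"
  shows "pi_step (lobster11_cells n) (lobster_tab n i j) (lobster_tab n (i - 1) j)"
  using assms pi_op_lobster_tab[OF ij, of "i - 1"]
  unfolding pi_step_def by (intro exI[of _ "i - 1"]) (auto simp: card_lobster11_cells)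

lemma reachable_raise_top:
  assumes ij: "(i, j) \<in> root_indices n" and "j \<le> j'" and j': "j' \<le> n"
  shows "(pi_step (lobster11_cells n))\<^sup>*\<^sup>* (lobster_tab n i j) (lobster_tab n i j')"
  using \<open>j \<le> j'\<close>
proof (induction j' rule: dec_induct)
  case (step m)
  with ij j' have "pi_step (lobster11_cells n) (lobster_tab n i m) (lobster_tab n i (Suc m))"
    using pi_step_raise_top[of i m n] by simp
  with step.IH show ?case
    by (simp add: rtranclp.rtrancl_into_rtrancl)
qed simp

lemma reachable_lower_bottom:
  assumes ij: "(i, j) \<in> root_indices n" and "i' \<le> i" and i': "1 \<le> i'"
  shows "(pi_step (lobster11_cells n))\<^sup>*\<^sup>* (lobster_tab n i j) (lobster_tab n i' j)"
  using \<open>i' \<le> i\<close>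
proof (induction i' rule: inc_induct)
  case (step m)
  with ij i' have "pi_step (lobster11_cells n) (lobster_tab n (Suc m) j) (lobster_tab n m j)"
    using pi_step_lower_bottom[of "Suc m" j n] by simp
  with step.IH show ?case
    by (simp add: rtranclp.rtrancl_into_rtrancl)
qed simp

lemma set_le_lobster_tab_iff:
  assumes ij: "(i, j) \<in> root_indices n" and ij': "(i', j') \<in> root_indices n"
  shows "set_le (lobster11_cells n) (lobster_tab n i j) (lobster_tab n i' j') \<longleftrightarrow> claw_le (i, j) (i', j')"
proof
  assume "set_le (lobster11_cells n) (lobster_tab n i j) (lobster_tab n i' j')"
  then have reach: "(pi_step (lobster11_cells n))\<^sup>*\<^sup>* (lobster_tab n i j) (lobster_tab n i' j')"
    by (simp add: set_le_def)
  have "\<exists>a b. T = lobster_tab n a b \<and> (a, b) \<in> root_indices n \<and> claw_le (i, j) (a, b)"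
    if "(pi_step (lobster11_cells n))\<^sup>*\<^sup>* (lobster_tab n i j) T" for T
    using that
  proof (induction rule: rtranclp_induct)
    case base
    with ij show ?case by (auto simp: claw_le_def)
  next
    case (step T T')
    then obtain a b where ab: "T = lobster_tab n a b" "(a, b) \<in> root_indices n" "claw_le (i, j) (a, b)"
      by blast
    with step.hyps(2) obtain a' b' where "T' = lobster_tab n a' b'" "(a', b') \<in> root_indices n"
        "claw_le (a, b) (a', b')"
      using pi_step_lobster_tab by blast
    moreover from this(3) ab(3) have "claw_le (i, j) (a', b')"
      by (auto simp: claw_le_def)
    ultimately show ?case
      by blast
  qed
  from this[OF reach] show "claw_le (i, j) (i', j')"
    by (auto simp: lobster_tab_inject)
next
  assume "claw_le (i, j) (i', j')"
  then have "i' \<le> i" "j \<le> j'"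
    by (simp_all add: claw_le_def)
  with ij ij' have "(pi_step (lobster11_cells n))\<^sup>*\<^sup>* (lobster_tab n i j) (lobster_tab n i' j')"
    using reachable_raise_top[OF ij, of j'] reachable_lower_bottom[of i j' n i']
    by (auto intro: rtranclp_trans)
  with ij ij' show "set_le (lobster11_cells n) (lobster_tab n i j) (lobster_tab n i' j')"
    by (simp add: set_le_def lobster_tab_in_SET)
qed

lemma set_le_SET_lobster11_iff:
  assumes T: "T \<in> SET (lobster11_cells n)" and T': "T' \<in> SET (lobster11_cells n)" and n: "2 \<le> n"
  shows "set_le (lobster11_cells n) T T' \<longleftrightarrow> claw_le (T (1, n), T (3, n)) (T' (1, n), T' (3, n))"
proof -
  have "set_le (lobster11_cells n) T T' \<longleftrightarrow> set_le (lobster11_cells n)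
      (lobster_tab n (T (1, n)) (T (3, n))) (lobster_tab n (T' (1, n)) (T' (3, n)))"
    by (simp only: flip: SET_lobster11_eq_tab[OF T n] SET_lobster11_eq_tab[OF T' n])
  also have "\<dots> \<longleftrightarrow> claw_le (T (1, n), T (3, n)) (T' (1, n), T' (3, n))"
    by (rule set_le_lobster_tab_iff[OF SET_lobster11_claws[OF T n] SET_lobster11_claws[OF T' n]])
  finally show ?thesis .
qed

lemma poset_iso_SET_lobster11:
  assumes "2 \<le> n"
  shows "poset_iso (SET (lobster11_cells n)) (set_le (lobster11_cells n)) (root_indices n) claw_le"
  using bij_betw_claws[OF assms] set_le_SET_lobster11_iff[OF _ _ assms]
  unfolding poset_iso_def by blast

section \<open>Minimal elements\<close>

lemma minimal_SET_lobster11_iff: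
  assumes n: "2 \<le> n"
  shows "minimal_in (SET (lobster11_cells n)) (set_le (lobster11_cells n)) T
    \<longleftrightarrow> T \<in> SET (lobster11_cells n) \<and> T (3, n) = T (1, n) + 1"
proof (cases "T \<in> SET (lobster11_cells n)")
  case True
  have "\<forall>T \<in> SET (lobster11_cells n). \<forall>T' \<in> SET (lobster11_cells n).
      set_le (lobster11_cells n) T T' \<longleftrightarrow> claw_le (T (1, n), T (3, n)) (T' (1, n), T' (3, n))"
    using set_le_SET_lobster11_iff[OF _ _ n] by blast
  then have "minimal_in (SET (lobster11_cells n)) (set_le (lobster11_cells n)) T
      \<longleftrightarrow> minimal_in (root_indices n) claw_le (T (1, n), T (3, n))"
    by (rule minimal_in_bij_betw_iff[OF bij_betw_claws[OF n] _ True])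
  with True SET_lobster11_claws[OF True n] show ?thesis
    by (simp add: minimal_in_root_indices_iff)
qed (simp add: minimal_in_def)

lemma minimal_SET_lobster11_eq:
  assumes n: "2 \<le> n"
  shows "{T. minimal_in (SET (lobster11_cells n)) (set_le (lobster11_cells n)) T}
    = (\<lambda>i. lobster_tab n i (i + 1)) ` {1..n - 1}"
proof (intro set_eqI iffI)
  fix T assume "T \<in> {T. minimal_in (SET (lobster11_cells n)) (set_le (lobster11_cells n)) T}"
  then have T: "T \<in> SET (lobster11_cells n)" and "T (3, n) = T (1, n) + 1"
    using minimal_SET_lobster11_iff[OF n] by auto
  then have "T = lobster_tab n (T (1, n)) (T (1, n) + 1)" "T (1, n) \<in> {1..n - 1}"
    using SET_lobster11_eq_tab[OF T n] SET_lobster11_claws[OF T n] by auto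
  then show "T \<in> (\<lambda>i. lobster_tab n i (i + 1)) ` {1..n - 1}"
    by blast
next
  fix T assume "T \<in> (\<lambda>i. lobster_tab n i (i + 1)) ` {1..n - 1}"
  then obtain i where "i \<in> {1..n - 1}" "T = lobster_tab n i (i + 1)"
    by blast
  with n show "T \<in> {T. minimal_in (SET (lobster11_cells n)) (set_le (lobster11_cells n)) T}"
    using minimal_SET_lobster11_iff[OF n] lobster_tab_in_SET[of i "i + 1" n] by auto
qed

lemma reading_word_lobster_1_1:
  assumes n: "3 \<le> n"
  shows "reading_word (lobster_alpha (n - 2) 1 1) (lobster_beta (n - 2)) T
       = T (3, n) # map (\<lambda>c. T (2, c)) (rev [2..<n]) @ [T (1, n)]"
proof -
  have "lobster_alpha (n - 2) 1 1 = [n, n - 1, n]"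
    using n by (simp add: lobster_alpha_def) arith
  moreover have "lobster_beta (n - 2) = [n - 1, 1, n - 1]"
    using n by (simp add: lobster_beta_def)
  moreover have "rev [1..<length [n, n - 1, n] + 1] = [3, 2, 1]"
    by (simp add: upt_rec)
  moreover have "[n - 1 + 1..<n + 1] = [n]" "[1 + 1..<n - 1 + 1] = [2..<n]" "[Suc (Suc 0)..<n] = [2..<n]"
    using n by (simp_all add: numeral_2_eq_2)
  ultimately show ?thesis
    unfolding reading_word_def by (simp del: upt_Suc)
qed

lemma inversions_reading_word_minimal:
  assumes n: "3 \<le> n" and T: "T \<in> SET (lobster11_cells n)" and top: "T (3, n) = T (1, n) + 1"
  shows "inversions (reading_word (lobster_alpha (n - 2) 1 1) (lobster_beta (n - 2)) T)
     = n - 1 + (n - 2 choose 2)"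
proof -
  let ?i = "T (1, n)"
  define body where "body = map (\<lambda>c. T (2, c)) (rev [2..<n])"
  have "sorted_wrt (>) body"
    using sorted_body_SET_lobster11[OF T] by (simp add: body_def sorted_wrt_rev flip: rev_map)
  then have body_inversions: "inversions body = n - 2 choose 2"
    by (simp add: inversions_strictly_decreasing body_def)
  have "filter (\<lambda>x. ?i < x) body = filter (\<lambda>x. \<not> x < ?i + 1) body"
    by (rule filter_cong) auto
  then have "length (filter (\<lambda>y. y < ?i + 1) body) + length (filter (\<lambda>x. ?i < x) body) = length body"
    by (simp add: sum_length_filter_compl)
  then have "inversions ((?i + 1) # body @ [?i]) = length body + 1 + inversions body"
    by (simp add: inversions_Cons inversions_snoc)
  also have "\<dots> = n - 1 + (n - 2 choose 2)"
    using n body_inversions by (simp add: body_def)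
  finally show ?thesis
    unfolding reading_word_lobster_1_1[OF n] top body_def .
qed

theorem proposition5p2:
  fixes n :: nat
  assumes "n \<ge> 3"
  defines "D \<equiv> lobster (n - 2) 1 1"
  shows "(\<forall>i j. 1 \<le> i \<and> i < j \<and> j \<le> n \<longrightarrow>
            (\<exists>!T. T \<in> SET D \<and> T (3, n) = j \<and> T (1, n) = i))
    \<and> poset_iso (SET D) (set_le D) (pos_roots_A n) (root_le_A n)
    \<and> poset_iso (SET D) (set_le D)
        {p :: nat \<times> nat. fst p + snd p \<le> n - 2} (\<lambda>p q. fst p \<ge> fst q \<and> snd p \<ge> snd q)
    \<and> card {T. minimal_in (SET D) (set_le D) T} = n - 1
    \<and> {T. minimal_in (SET D) (set_le D) T} = {M_tab n (i + 1) i | i. 1 \<le> i \<and> i \<le> n - 1}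
    \<and> (\<forall>T T'. minimal_in (SET D) (set_le D) T \<longrightarrow> minimal_in (SET D) (set_le D) T' \<longrightarrow>
         inversions (reading_word (lobster_alpha (n - 2) 1 1) (lobster_beta (n - 2)) T)
       = inversions (reading_word (lobster_alpha (n - 2) 1 1) (lobster_beta (n - 2)) T'))
    \<and> card (SET D) = n choose 2"
proof -
  have n: "3 \<le> n" "2 \<le> n"
    using assms(1) by simp_all
  have D: "D = lobster11_cells n"
    unfolding D_def by (rule lobster_1_1_eq[OF n(1)])
  have iso: "poset_iso (SET D) (set_le D) (root_indices n) claw_le"
    unfolding D by (rule poset_iso_SET_lobster11[OF n(2)])
  have minimal: "{T. minimal_in (SET D) (set_le D) T} = (\<lambda>i. lobster_tab n i (i + 1)) ` {1..n - 1}"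
    unfolding D by (rule minimal_SET_lobster11_eq[OF n(2)])
  have "inj_on (\<lambda>i. lobster_tab n i (i + 1)) {1..n - 1}"
    by (simp add: inj_on_def lobster_tab_inject)
  then have "card {T. minimal_in (SET D) (set_le D) T} = n - 1"
    unfolding minimal by (simp add: card_image)
  moreover have "(\<lambda>i. lobster_tab n i (i + 1)) ` {1..n - 1} = {M_tab n (i + 1) i | i. 1 \<le> i \<and> i \<le> n - 1}"
    using M_tab_eq[OF n(1)] n by force
  moreover have "inversions (reading_word (lobster_alpha (n - 2) 1 1) (lobster_beta (n - 2)) T)
      = n - 1 + (n - 2 choose 2)" if "minimal_in (SET D) (set_le D) T" for T
    using that inversions_reading_word_minimal[OF n(1)] minimal_SET_lobster11_iff[OF n(2)]
    unfolding D by blast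
  moreover have "card (SET D) = n choose 2"
    unfolding D using bij_betw_same_card[OF bij_betw_claws[OF n(2)]] card_root_indices by simp
  ultimately show ?thesis
    using ex1_SET_lobster11_claws[of _ _ n] minimal
      poset_iso_trans[OF iso poset_iso_pos_roots] poset_iso_trans[OF iso poset_iso_triangle[OF n(2)]]
    unfolding D by auto
qed

end
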